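(* Let $X,X'$ be i.i.d. random vectors in $\mathbb{R}^m$ and $Y,Y'$ i.i.d. random vectors in $\mathbb{R}^n$ (with $X,Y$ defined on a common probability space). Let $\mu,\nu$ be symmetric Lévy measures on $\mathbb{R}^m\setminus\{0\}$ and $\mathbb{R}^n\setminus\{0\}$ with full support and $\Phi(x)=\int(1-\cos\langle x,s\rangle)\mu(ds)$, $\Psi(y)=\int(1-\cos\langle y,t\rangle)\nu(dt)$. Then $$V^2(X,Y)\le\mathbb{E}\Phi(X-X')\cdot\mathbb{E}\Psi(Y-Y')\le16\,\mathbb{E}\Phi(X)\cdot\mathbb{E}\Psi(Y).$$
   Context: Symmetric Lévy measure on $\mathbb{R}^d\setminus\{0\}$: $\rho(B)=\rho(-B)$ and $\int(1\wedge|r|^2)\rho(dr)<\infty$; full support: positive mass on every nonempty open subset. $V^2(X,Y)=\iint|f_{(X,Y)}(s,t)-f_X(s)f_Y(t)|^2\,\mu(ds)\,\nu(dt)$, $f$ denoting characteristic functions. *)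

theory Defs
  imports "HOL-Probability.Probability"
begin

definition sym_levy_full :: "('a::euclidean_space) measure \<Rightarrow> bool" where
  "sym_levy_full \<mu> \<longleftrightarrow>
     sets \<mu> = sets borel \<and>
     emeasure \<mu> {0} = 0 \<and>
     (\<forall>B \<in> sets borel. emeasure \<mu> (uminus ` B) = emeasure \<mu> B) \<and>
     (\<integral>\<^sup>+ r. ennreal (min 1 (norm r ^ 2)) \<partial>\<mu>) < \<infinity> \<and>
     (\<forall>U. open U \<and> U \<noteq> {} \<and> 0 \<notin> U \<longrightarrow> emeasure \<mu> U > 0)"

definition levy_fn :: "('a::euclidean_space) measure \<Rightarrow> 'a \<Rightarrow> ennreal" where
  "levy_fn \<mu> x = (\<integral>\<^sup>+ s. ennreal (1 - cos (x \<bullet> s)) \<partial>\<mu>)"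

definition char_fun :: "'w measure \<Rightarrow> ('w \<Rightarrow> 'a::euclidean_space) \<Rightarrow> 'a \<Rightarrow> complex" where
  "char_fun M X s = (CLINT w|M. cis (s \<bullet> X w))"

definition char_fun2 :: "'w measure \<Rightarrow> ('w \<Rightarrow> 'a::euclidean_space) \<Rightarrow> ('w \<Rightarrow> 'b::euclidean_space)
    \<Rightarrow> 'a \<Rightarrow> 'b \<Rightarrow> complex" where
  "char_fun2 M X Y s t = (CLINT w|M. cis (s \<bullet> X w + t \<bullet> Y w))"

definition dcov2 :: "'w measure \<Rightarrow> 'a::euclidean_space measure \<Rightarrow> 'b::euclidean_space measure
    \<Rightarrow> ('w \<Rightarrow> 'a) \<Rightarrow> ('w \<Rightarrow> 'b) \<Rightarrow> ennreal" where
  "dcov2 M \<mu> \<nu> X Y =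
     (\<integral>\<^sup>+ s. (\<integral>\<^sup>+ t. ennreal ((cmod (char_fun2 M X Y s t - char_fun M X s * char_fun M Y t))\<^sup>2) \<partial>\<nu>) \<partial>\<mu>)"

end

theory Submission imports Defs begin

text \<open>Centre the exponentials: with A = exp(i<s,X>) - \<phi>X(s) and B = exp(i<t,Y>) - \<phi>Y(t)
  one has E[A B] = \<phi>XY(s,t) - \<phi>X(s) \<phi>Y(t) and E|A|^2 = 1 - |\<phi>X(s)|^2, so Cauchy-Schwarz bounds
  the integrand of V^2 by (1 - |\<phi>X(s)|^2) (1 - |\<phi>Y(t)|^2). For an independent copy X' of X,
  |\<phi>X(s)|^2 = E cos <s, X - X'>, and integrating 1 - |\<phi>X|^2 against \<mu> (Tonelli) gives
  E \<Phi>(X - X'). The second inequality follows from 1 - cos (a - b) \<le> 2 (1 - cos a) + 2 (1 - cos b),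
  i.e. \<Phi>(x - y) \<le> 2 \<Phi>(x) + 2 \<Phi>(y).\<close>

lemma Cauchy_Schwarz_integral:
  fixes f g :: "'a \<Rightarrow> real"
  assumes "integrable M (\<lambda>x. f x ^ 2)" "integrable M (\<lambda>x. g x ^ 2)"
    and "integrable M (\<lambda>x. f x * g x)"
  shows "(\<integral>x. f x * g x \<partial>M)\<^sup>2 \<le> (\<integral>x. f x ^ 2 \<partial>M) * (\<integral>x. g x ^ 2 \<partial>M)"
proof -
  define a b c where "a = (\<integral>x. f x ^ 2 \<partial>M)" and "b = (\<integral>x. g x ^ 2 \<partial>M)"
    and "c = (\<integral>x. f x * g x \<partial>M)"
  have quadratic_nonneg: "0 \<le> a + 2 * z * c + z\<^sup>2 * b" for z
  proof -
    have "0 \<le> (\<integral>x. (f x + z * g x)\<^sup>2 \<partial>M)"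
      by (intro integral_nonneg_AE) auto
    also have "(\<lambda>x. (f x + z * g x)\<^sup>2) = (\<lambda>x. f x ^ 2 + (2 * z) * (f x * g x) + z\<^sup>2 * g x ^ 2)"
      by (auto simp: power2_eq_square algebra_simps)
    also have "(\<integral>x. f x ^ 2 + (2 * z) * (f x * g x) + z\<^sup>2 * g x ^ 2 \<partial>M) = a + 2 * z * c + z\<^sup>2 * b"
      using assms by (simp add: a_def b_def c_def)
    finally show ?thesis .
  qed
  have "0 \<le> b"
    unfolding b_def by (intro integral_nonneg_AE) auto
  show ?thesis
  proof (cases "b = 0")
    case True
    have "c = 0"
    proof (rule ccontr)
      assume "c \<noteq> 0"
      with True quadratic_nonneg[of "- (a + 1) / (2 * c)"] show False
        by (simp add: field_simps)
    qed
    with True show ?thesis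
      by (simp add: b_def c_def[symmetric])
  next
    case False
    with \<open>0 \<le> b\<close> have "0 < b" by simp
    with quadratic_nonneg[of "- c / b"] have "c\<^sup>2 \<le> a * b"
      by (simp add: field_simps power2_eq_square)
    then show ?thesis
      by (simp add: a_def b_def c_def)
  qed
qed

lemma borel_measurable_cis [measurable]: "cis \<in> borel_measurable borel"
  by (intro borel_measurable_continuous_onI continuous_intros)

context prob_space
begin

lemma integrable_cis:
  assumes [measurable]: "h \<in> borel_measurable M"
  shows "integrable M (\<lambda>w. cis (h w))"
  by (rule integrable_const_bound[where B = 1]) auto

lemma integrable_bounded_real:
  fixes h :: "_ \<Rightarrow> real"
  assumes [measurable]: "h \<in> borel_measurable M" and "\<And>w. \<bar>h w\<bar> \<le> B"
  shows "integrable M h"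
  by (rule integrable_const_bound[where B = B]) (auto simp: assms)

lemma Re_char_fun:
  assumes [measurable]: "X \<in> borel_measurable M"
  shows "Re (char_fun M X s) = (\<integral>w. cos (s \<bullet> X w) \<partial>M)"
  unfolding char_fun_def by (subst integral_Re[symmetric]) (auto intro: integrable_cis)

lemma Im_char_fun:
  assumes [measurable]: "X \<in> borel_measurable M"
  shows "Im (char_fun M X s) = (\<integral>w. sin (s \<bullet> X w) \<partial>M)"
  unfolding char_fun_def by (subst integral_Im[symmetric]) (auto intro: integrable_cis)

lemma norm_char_fun_le_1: "cmod (char_fun M X s) \<le> 1"
proof -
  have "cmod (char_fun M X s) \<le> (\<integral>w. cmod (cis (s \<bullet> X w)) \<partial>M)"
    unfolding char_fun_def by (rule integral_norm_bound)
  also have "\<dots> = 1"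
    by (simp add: prob_space)
  finally show ?thesis .
qed

lemma char_fun_eq_if_distr_eq:
  assumes [measurable]: "X \<in> borel_measurable M" "X' \<in> borel_measurable M"
    and "distr M borel X = distr M borel X'"
  shows "char_fun M X s = char_fun M X' s"
proof -
  have "char_fun M Z s = (CLINT x|distr M borel Z. cis (s \<bullet> x))"
    if [measurable]: "Z \<in> borel_measurable M" for Z
    unfolding char_fun_def by (subst integral_distr) auto
  with assms show ?thesis by simp
qed

lemma integral_norm_cis_minus_char_fun_sq:
  assumes [measurable]: "X \<in> borel_measurable M"
  shows "(\<integral>w. (cmod (cis (s \<bullet> X w) - char_fun M X s))\<^sup>2 \<partial>M) = 1 - (cmod (char_fun M X s))\<^sup>2"
proof -
  define f where "f = char_fun M X s"
  have pointwise: "(cmod (cis (s \<bullet> X w) - f))\<^sup>2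
      = 1 - 2 * Re f * cos (s \<bullet> X w) - 2 * Im f * sin (s \<bullet> X w) + ((Re f)\<^sup>2 + (Im f)\<^sup>2)" for w
    using sin_cos_squared_add[of "s \<bullet> X w"] by (simp add: cmod_power2 power2_diff algebra_simps)
  have "integrable M (\<lambda>w. cos (s \<bullet> X w))" "integrable M (\<lambda>w. sin (s \<bullet> X w))"
    by (auto intro: integrable_bounded_real[where B = 1])
  moreover have "Re f = (\<integral>w. cos (s \<bullet> X w) \<partial>M)" "Im f = (\<integral>w. sin (s \<bullet> X w) \<partial>M)"
    by (simp_all add: f_def Re_char_fun Im_char_fun)
  ultimately have "(\<integral>w. (cmod (cis (s \<bullet> X w) - f))\<^sup>2 \<partial>M)
      = 1 - 2 * Re f * Re f - 2 * Im f * Im f + ((Re f)\<^sup>2 + (Im f)\<^sup>2)"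
    by (simp add: pointwise prob_space)
  also have "\<dots> = 1 - (cmod f)\<^sup>2"
    by (simp only: cmod_power2) (simp add: power2_eq_square)
  finally show ?thesis
    by (simp add: f_def)
qed

lemma integral_cos_inner_diff_iid:
  assumes [measurable]: "X \<in> borel_measurable M" "X' \<in> borel_measurable M"
    and indep: "indep_var borel X borel X'"
    and distr_eq: "distr M borel X = distr M borel X'"
  shows "(\<integral>w. cos (s \<bullet> (X w - X' w)) \<partial>M) = (cmod (char_fun M X s))\<^sup>2"
proof -
  define f where "f = char_fun M X s"
  have "indep_var borel ((\<lambda>x. cis (s \<bullet> x)) \<circ> X) borel ((\<lambda>x. cnj (cis (s \<bullet> x))) \<circ> X')"
    by (rule indep_var_compose[OF indep]) (auto simp: cis_cnj)
  then have "(CLINT w|M. cis (s \<bullet> X w) * cnj (cis (s \<bullet> X' w)))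
      = (CLINT w|M. cis (s \<bullet> X w)) * (CLINT w|M. cnj (cis (s \<bullet> X' w)))"
    by (intro indep_var_lebesgue_integral) (auto simp: comp_def intro!: integrable_cis)
  also have "\<dots> = f * cnj f"
    using char_fun_eq_if_distr_eq[OF assms(1,2) distr_eq] by (simp add: f_def char_fun_def)
  finally have product: "(CLINT w|M. cis (s \<bullet> X w) * cnj (cis (s \<bullet> X' w))) = f * cnj f" .
  have "(\<integral>w. cos (s \<bullet> (X w - X' w)) \<partial>M) = (\<integral>w. Re (cis (s \<bullet> X w) * cnj (cis (s \<bullet> X' w))) \<partial>M)"
    by (simp add: cis_cnj cis_mult inner_diff_right)
  also have "\<dots> = Re (CLINT w|M. cis (s \<bullet> X w) * cnj (cis (s \<bullet> X' w)))"
    by (rule integral_Re) (auto intro!: integrable_cis simp: cis_cnj cis_mult)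
  also have "\<dots> = (cmod f)\<^sup>2"
    by (simp only: product cmod_power2) (simp add: power2_eq_square)
  finally show ?thesis by (simp add: f_def)
qed

lemma norm_char_fun2_minus_mult_sq_le:
  assumes [measurable]: "X \<in> borel_measurable M" "Y \<in> borel_measurable M"
  shows "(cmod (char_fun2 M X Y s t - char_fun M X s * char_fun M Y t))\<^sup>2
     \<le> (1 - (cmod (char_fun M X s))\<^sup>2) * (1 - (cmod (char_fun M Y t))\<^sup>2)"
proof -
  define fx fy where "fx = char_fun M X s" and "fy = char_fun M Y t"
  define A B where "A w = cis (s \<bullet> X w) - fx" and "B w = cis (t \<bullet> Y w) - fy" for w
  have [measurable]: "A \<in> borel_measurable M" "B \<in> borel_measurable M"
    unfolding A_def B_def by auto
  have "A w * B w = cis (s \<bullet> X w + t \<bullet> Y w) - fy * cis (s \<bullet> X w) - fx * cis (t \<bullet> Y w) + fx * fy"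
    for w by (simp add: A_def B_def cis_mult algebra_simps)
  then have covariance: "(CLINT w|M. A w * B w) = char_fun2 M X Y s t - fx * fy"
    by (simp add: integrable_cis prob_space char_fun2_def fx_def fy_def char_fun_def)
  have "cmod (A w) \<le> 2" "cmod (B w) \<le> 2" for w
    using norm_triangle_ineq4[of "cis (s \<bullet> X w)" fx] norm_triangle_ineq4[of "cis (t \<bullet> Y w)" fy]
      norm_char_fun_le_1[of X s] norm_char_fun_le_1[of Y t]
    by (auto simp: A_def B_def fx_def fy_def)
  then have "\<bar>(cmod (A w))\<^sup>2\<bar> \<le> 4" "\<bar>(cmod (B w))\<^sup>2\<bar> \<le> 4" "\<bar>cmod (A w) * cmod (B w)\<bar> \<le> 4" for w
    using power_mono[of "cmod (A w)" 2 2] power_mono[of "cmod (B w)" 2 2]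
      mult_mono[of "cmod (A w)" 2 "cmod (B w)" 2]
    by (auto simp: abs_mult)
  then have integrable: "integrable M (\<lambda>w. (cmod (A w))\<^sup>2)" "integrable M (\<lambda>w. (cmod (B w))\<^sup>2)"
      "integrable M (\<lambda>w. cmod (A w) * cmod (B w))"
    by (auto intro: integrable_bounded_real[where B = 4])
  have "cmod (CLINT w|M. A w * B w) \<le> (\<integral>w. cmod (A w) * cmod (B w) \<partial>M)"
    using integral_norm_bound[of M "\<lambda>w. A w * B w"] by (simp add: norm_mult)
  then have "(cmod (CLINT w|M. A w * B w))\<^sup>2 \<le> (\<integral>w. cmod (A w) * cmod (B w) \<partial>M)\<^sup>2"
    by (rule power_mono) simp
  also have "\<dots> \<le> (\<integral>w. (cmod (A w))\<^sup>2 \<partial>M) * (\<integral>w. (cmod (B w))\<^sup>2 \<partial>M)"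
    using Cauchy_Schwarz_integral[OF integrable] .
  also have "\<dots> = (1 - (cmod fx)\<^sup>2) * (1 - (cmod fy)\<^sup>2)"
    by (simp add: A_def B_def fx_def fy_def integral_norm_cis_minus_char_fun_sq)
  finally show ?thesis
    by (simp add: covariance fx_def fy_def)
qed

end

lemma levy_measure_sigma_finite:
  fixes \<mu> :: "'a::euclidean_space measure"
  assumes sets: "sets \<mu> = sets borel" and "emeasure \<mu> {0} \<noteq> \<infinity>"
    and finite: "(\<integral>\<^sup>+ r. ennreal (min 1 (norm r ^ 2)) \<partial>\<mu>) < \<infinity>"
  shows "sigma_finite_measure \<mu>"
proof
  define A where "A n = {r::'a. 1 / real (Suc n) < norm r}" for n
  have A_sets: "A n \<in> sets \<mu>" for n
    unfolding sets A_def by (intro borel_open open_Collect_less) (auto intro!: continuous_intros)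
  have "emeasure \<mu> (A n) \<noteq> \<infinity>" for n
  proof
    assume infinite: "emeasure \<mu> (A n) = \<infinity>"
    define c where "c = 1 / (real (Suc n))\<^sup>2"
    have "c \<le> min 1 (norm r ^ 2)" if "r \<in> A n" for r
    proof -
      have "(1 / real (Suc n))\<^sup>2 \<le> (norm r)\<^sup>2"
        using that by (intro power_mono) (auto simp: A_def)
      then show ?thesis
        by (simp add: c_def power_divide)
    qed
    then have "ennreal c * indicator (A n) r \<le> ennreal (min 1 (norm r ^ 2))" for r
      by (auto simp: indicator_def intro: ennreal_leI)
    then have "ennreal c * emeasure \<mu> (A n) \<le> (\<integral>\<^sup>+ r. ennreal (min 1 (norm r ^ 2)) \<partial>\<mu>)"
      by (subst nn_integral_cmult_indicator[symmetric, OF A_sets]) (rule nn_integral_mono)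
    with finite infinite show False
      by (simp add: c_def ennreal_mult_top)
  qed
  moreover have "\<Union> (insert {0} (range A)) = UNIV"
  proof -
    have "r \<in> \<Union> (range A)" if "r \<noteq> 0" for r :: 'a
    proof -
      from that obtain n where "inverse (real (Suc n)) < norm r"
        using reals_Archimedean[of "norm r"] by auto
      then show ?thesis
        by (auto simp: A_def field_simps)
    qed
    then show ?thesis by auto
  qed
  ultimately show "\<exists>F::'a set set. countable F \<and> F \<subseteq> sets \<mu> \<and> \<Union>F = space \<mu> \<and> (\<forall>a\<in>F. emeasure \<mu> a \<noteq> \<infinity>)"
    using A_sets assms(2) sets_eq_imp_space_eq[OF sets]
    by (intro exI[of _ "insert {0} (range A)"]) (auto simp: sets)
qed

lemma sym_levy_full_sigma_finite: "sym_levy_full \<mu> \<Longrightarrow> sigma_finite_measure \<mu>"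
  unfolding sym_levy_full_def by (intro levy_measure_sigma_finite) auto

lemma one_minus_cos_diff_le: "1 - cos (a - b) \<le> 2 * (1 - cos a) + 2 * (1 - cos (b::real))"
proof -
  have "0 \<le> ((cos a - 1) + (cos b - 1))\<^sup>2 + (sin a + sin b)\<^sup>2" by simp
  also have "\<dots> = 2 * (2 * (1 - cos a) + 2 * (1 - cos b)) - 2 * (1 - cos (a - b))"
    by (simp add: cos_diff power2_eq_square algebra_simps)
      (use sin_cos_squared_add3[of a] sin_cos_squared_add3[of b] in linarith)
  finally show ?thesis by simp
qed

lemma borel_measurable_levy_fn:
  fixes \<mu> :: "'a::euclidean_space measure"
  assumes "sigma_finite_measure \<mu>" and sets: "sets \<mu> = sets borel"
  shows "levy_fn \<mu> \<in> borel_measurable borel"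
proof -
  interpret sigma_finite_measure \<mu> by fact
  have [measurable_cong]: "sets \<mu> = sets borel" by (rule sets)
  show ?thesis
    unfolding levy_fn_def by (rule borel_measurable_nn_integral) measurable
qed

lemma levy_fn_diff_le:
  fixes \<mu> :: "'a::euclidean_space measure"
  assumes sets: "sets \<mu> = sets borel"
  shows "levy_fn \<mu> (x - y) \<le> 2 * levy_fn \<mu> x + 2 * levy_fn \<mu> y"
proof -
  have [measurable_cong]: "sets \<mu> = sets borel" by (rule sets)
  have ennreal_sum: "ennreal (2 * u + 2 * v) = 2 * ennreal u + 2 * ennreal v"
    if "0 \<le> u" "0 \<le> v" for u v :: real
    using that by (simp add: ennreal_mult')
  have "ennreal (1 - cos ((x - y) \<bullet> s)) \<le> ennreal (2 * (1 - cos (x \<bullet> s)) + 2 * (1 - cos (y \<bullet> s)))"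
    for s
    using one_minus_cos_diff_le[of "x \<bullet> s" "y \<bullet> s"] by (intro ennreal_leI) (simp add: inner_diff_left)
  also have "\<dots> s = 2 * ennreal (1 - cos (x \<bullet> s)) + 2 * ennreal (1 - cos (y \<bullet> s))" for s
    by (rule ennreal_sum) simp_all
  finally have "levy_fn \<mu> (x - y) \<le> (\<integral>\<^sup>+ s. 2 * ennreal (1 - cos (x \<bullet> s)) + 2 * ennreal (1 - cos (y \<bullet> s)) \<partial>\<mu>)"
    unfolding levy_fn_def by (intro nn_integral_mono)
  also have "\<dots> = 2 * levy_fn \<mu> x + 2 * levy_fn \<mu> y"
    unfolding levy_fn_def by (simp add: nn_integral_add nn_integral_cmult)
  finally show ?thesis .
qed

lemma nn_integral_one_minus_norm_char_fun_sq:
  fixes X X' :: "'w \<Rightarrow> 'a::euclidean_space"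
  assumes "prob_space M"
    and [measurable]: "X \<in> borel_measurable M" "X' \<in> borel_measurable M"
    and "prob_space.indep_var M borel X borel X'"
    and "distr M borel X = distr M borel X'"
    and "sigma_finite_measure \<mu>" and sets: "sets \<mu> = sets borel"
  shows "(\<integral>\<^sup>+ s. ennreal (1 - (cmod (char_fun M X s))\<^sup>2) \<partial>\<mu>) = (\<integral>\<^sup>+ w. levy_fn \<mu> (X w - X' w) \<partial>M)"
proof -
  interpret P: prob_space M by fact
  interpret pair_sigma_finite \<mu> M
    by (intro pair_sigma_finite.intro assms(6) prob_space_imp_sigma_finite assms(1))
  have [measurable_cong]: "sets \<mu> = sets borel" by (rule sets)
  have "ennreal (1 - (cmod (char_fun M X s))\<^sup>2) = (\<integral>\<^sup>+ w. ennreal (1 - cos (s \<bullet> (X w - X' w))) \<partial>M)"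
    for s
  proof -
    have "integrable M (\<lambda>w. cos (s \<bullet> (X w - X' w)))"
      by (auto intro: P.integrable_bounded_real[where B = 1])
    then have "1 - (cmod (char_fun M X s))\<^sup>2 = (\<integral>w. 1 - cos (s \<bullet> (X w - X' w)) \<partial>M)"
      using P.integral_cos_inner_diff_iid[OF assms(2-5)] by (simp add: P.prob_space)
    then show ?thesis
      by (simp add: nn_integral_eq_integral P.integrable_bounded_real[where B = 2])
  qed
  then have "(\<integral>\<^sup>+ s. ennreal (1 - (cmod (char_fun M X s))\<^sup>2) \<partial>\<mu>)
      = (\<integral>\<^sup>+ s. (\<integral>\<^sup>+ w. ennreal (1 - cos (s \<bullet> (X w - X' w))) \<partial>M) \<partial>\<mu>)"
    by simp
  also have "\<dots> = (\<integral>\<^sup>+ w. (\<integral>\<^sup>+ s. ennreal (1 - cos (s \<bullet> (X w - X' w))) \<partial>\<mu>) \<partial>M)"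
    by (rule Fubini'[symmetric]) measurable
  also have "\<dots> = (\<integral>\<^sup>+ w. levy_fn \<mu> (X w - X' w) \<partial>M)"
    unfolding levy_fn_def by (simp add: inner_commute)
  finally show ?thesis .
qed

lemma nn_integral_levy_fn_diff_le:
  fixes X X' :: "'w \<Rightarrow> 'a::euclidean_space"
  assumes [measurable]: "X \<in> borel_measurable M" "X' \<in> borel_measurable M"
    and distr_eq: "distr M borel X = distr M borel X'"
    and "sigma_finite_measure \<mu>" and sets: "sets \<mu> = sets borel"
  shows "(\<integral>\<^sup>+ w. levy_fn \<mu> (X w - X' w) \<partial>M) \<le> 4 * (\<integral>\<^sup>+ w. levy_fn \<mu> (X w) \<partial>M)"
proof -
  have [measurable]: "levy_fn \<mu> \<in> borel_measurable borel"
    by (rule borel_measurable_levy_fn) fact+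
  have "(\<integral>\<^sup>+ w. levy_fn \<mu> (X' w) \<partial>M) = (\<integral>\<^sup>+ w. levy_fn \<mu> (X w) \<partial>M)"
    using nn_integral_distr[of X M borel "levy_fn \<mu>"] nn_integral_distr[of X' M borel "levy_fn \<mu>"]
    by (simp add: distr_eq)
  moreover have "(\<integral>\<^sup>+ w. levy_fn \<mu> (X w - X' w) \<partial>M)
      \<le> (\<integral>\<^sup>+ w. 2 * levy_fn \<mu> (X w) + 2 * levy_fn \<mu> (X' w) \<partial>M)"
    by (intro nn_integral_mono levy_fn_diff_le[OF sets])
  ultimately show ?thesis
    by (simp add: nn_integral_add nn_integral_cmult flip: distrib_right)
qed

lemma dcov2_le:
  assumes "prob_space M" and [measurable]: "X \<in> borel_measurable M" "Y \<in> borel_measurable M"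
    and "sets \<mu> = sets borel" "sets \<nu> = sets borel"
  shows "dcov2 M \<mu> \<nu> X Y \<le> (\<integral>\<^sup>+ s. ennreal (1 - (cmod (char_fun M X s))\<^sup>2) \<partial>\<mu>)
                              * (\<integral>\<^sup>+ t. ennreal (1 - (cmod (char_fun M Y t))\<^sup>2) \<partial>\<nu>)"
proof -
  interpret prob_space M by fact
  have [measurable_cong]: "sets \<mu> = sets borel" "sets \<nu> = sets borel" by fact+
  have "0 \<le> 1 - (cmod (char_fun M X s))\<^sup>2" "0 \<le> 1 - (cmod (char_fun M Y t))\<^sup>2" for s t
    using norm_char_fun_le_1[of X s] norm_char_fun_le_1[of Y t] by (simp_all add: power_le_one)
  then have "dcov2 M \<mu> \<nu> X Y \<le> (\<integral>\<^sup>+ s. (\<integral>\<^sup>+ t. ennreal (1 - (cmod (char_fun M X s))\<^sup>2)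
                                  * ennreal (1 - (cmod (char_fun M Y t))\<^sup>2) \<partial>\<nu>) \<partial>\<mu>)"
    unfolding dcov2_def using norm_char_fun2_minus_mult_sq_le[of X Y]
    by (intro nn_integral_mono) (simp add: ennreal_leI flip: ennreal_mult)
  also have "\<dots> = (\<integral>\<^sup>+ s. ennreal (1 - (cmod (char_fun M X s))\<^sup>2) \<partial>\<mu>)
                 * (\<integral>\<^sup>+ t. ennreal (1 - (cmod (char_fun M Y t))\<^sup>2) \<partial>\<nu>)"
    unfolding char_fun_def by (simp add: nn_integral_cmult nn_integral_multc)
  finally show ?thesis .
qed

theorem lemma3p6:
  fixes M :: "'w measure"
    and X X' :: "'w \<Rightarrow> 'a::euclidean_space"
    and Y Y' :: "'w \<Rightarrow> 'b::euclidean_space"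
    and \<mu> :: "'a measure" and \<nu> :: "'b measure"
  assumes "prob_space M"
    and "X \<in> borel_measurable M" and "X' \<in> borel_measurable M"
    and "Y \<in> borel_measurable M" and "Y' \<in> borel_measurable M"
    and "prob_space.indep_var M borel X borel X'"
    and "distr M borel X = distr M borel X'"
    and "prob_space.indep_var M borel Y borel Y'"
    and "distr M borel Y = distr M borel Y'"
    and "sym_levy_full \<mu>" and "sym_levy_full \<nu>"
  shows "dcov2 M \<mu> \<nu> X Y
           \<le> (\<integral>\<^sup>+ w. levy_fn \<mu> (X w - X' w) \<partial>M) * (\<integral>\<^sup>+ w. levy_fn \<nu> (Y w - Y' w) \<partial>M)
         \<and> (\<integral>\<^sup>+ w. levy_fn \<mu> (X w - X' w) \<partial>M) * (\<integral>\<^sup>+ w. levy_fn \<nu> (Y w - Y' w) \<partial>M)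
           \<le> 16 * ((\<integral>\<^sup>+ w. levy_fn \<mu> (X w) \<partial>M) * (\<integral>\<^sup>+ w. levy_fn \<nu> (Y w) \<partial>M))"
proof
  have sets: "sets \<mu> = sets borel" "sets \<nu> = sets borel"
    using assms(10,11) by (simp_all add: sym_levy_full_def)
  have sigma_finite: "sigma_finite_measure \<mu>" "sigma_finite_measure \<nu>"
    using assms(10,11) by (simp_all add: sym_levy_full_sigma_finite)
  show "dcov2 M \<mu> \<nu> X Y
      \<le> (\<integral>\<^sup>+ w. levy_fn \<mu> (X w - X' w) \<partial>M) * (\<integral>\<^sup>+ w. levy_fn \<nu> (Y w - Y' w) \<partial>M)"
    using dcov2_le[OF assms(1,2,4) sets]
      nn_integral_one_minus_norm_char_fun_sq[OF assms(1-3,6,7) sigma_finite(1) sets(1)]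
      nn_integral_one_minus_norm_char_fun_sq[OF assms(1,4,5,8,9) sigma_finite(2) sets(2)]
    by simp
  have "(\<integral>\<^sup>+ w. levy_fn \<mu> (X w - X' w) \<partial>M) * (\<integral>\<^sup>+ w. levy_fn \<nu> (Y w - Y' w) \<partial>M)
      \<le> (4 * (\<integral>\<^sup>+ w. levy_fn \<mu> (X w) \<partial>M)) * (4 * (\<integral>\<^sup>+ w. levy_fn \<nu> (Y w) \<partial>M))"
    by (intro mult_mono nn_integral_levy_fn_diff_le sigma_finite sets) (use assms in auto)
  then show "(\<integral>\<^sup>+ w. levy_fn \<mu> (X w - X' w) \<partial>M) * (\<integral>\<^sup>+ w. levy_fn \<nu> (Y w - Y' w) \<partial>M)
      \<le> 16 * ((\<integral>\<^sup>+ w. levy_fn \<mu> (X w) \<partial>M) * (\<integral>\<^sup>+ w. levy_fn \<nu> (Y w) \<partial>M))"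
    by (simp add: mult_ac)
qed

end
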